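(* Let $t\ge 2$. Let $G$ be a 2-ichromatic ordered graph with vertices $v_1<\dots<v_{m+n}$ such that $\{v_1,\ldots,v_m\}$ and $\{v_{m+1},\ldots,v_{m+n}\}$ are the parts of an interval 2-coloring of $G$. If $v_1v_{m+1}$, $v_mv_{m+n}$ and $v_mv_{m+1}$ are edges of $G$, then $R_t(G)\ge (2t+1)r+1$, where $r=\min(m,n)-1$.
   Context: An ordered graph is a graph together with a specified linear ordering of its vertex set. An ordered graph $G$ is contained in an ordered graph $H$ if there is an order-preserving injection $V(G)\to V(H)$ mapping edges to edges. An interval coloring of an ordered graph is a partition of its vertex set into independent sets each consisting of consecutive vertices (called parts); an ordered graph is 2-ichromatic if its minimum number of parts in an interval coloring is 2. $R_t(G)$ is the minimum $N$ such that every coloring of the edges of the ordered complete graph on $N$ vertices with $t$ colors contains a monochromatic copy of $G$. *)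

theory Defs
  imports Main
begin

definition ordered_graph :: "nat \<Rightarrow> nat set set \<Rightarrow> bool" where
  "ordered_graph k E \<longleftrightarrow> (\<forall>e\<in>E. \<exists>i j. i < j \<and> j < k \<and> e = {i, j})"

definition interval_coloring :: "nat \<Rightarrow> nat set set \<Rightarrow> nat set set \<Rightarrow> bool" where
  "interval_coloring k E P \<longleftrightarrow>
     \<Union>P = {0..<k} \<and>
     (\<forall>p\<in>P. p \<noteq> {}) \<and>
     (\<forall>p\<in>P. \<forall>q\<in>P. p \<noteq> q \<longrightarrow> p \<inter> q = {}) \<and>
     (\<forall>p\<in>P. \<exists>a b. p = {a..<b}) \<and>
     (\<forall>p\<in>P. \<forall>e\<in>E. \<not> e \<subseteq> p)"

definition interval_chromatic_number :: "nat \<Rightarrow> nat set set \<Rightarrow> nat" where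
  "interval_chromatic_number k E = (LEAST c. \<exists>P. interval_coloring k E P \<and> card P = c)"

definition two_ichromatic :: "nat \<Rightarrow> nat set set \<Rightarrow> bool" where
  "two_ichromatic k E \<longleftrightarrow> interval_chromatic_number k E = 2"

definition ordered_arrows :: "nat \<Rightarrow> nat \<Rightarrow> nat \<Rightarrow> nat set set \<Rightarrow> bool" where
  "ordered_arrows N t k E \<longleftrightarrow>
     (\<forall>\<chi> :: nat set \<Rightarrow> nat. (\<forall>i j. i < j \<and> j < N \<longrightarrow> \<chi> {i, j} < t) \<longrightarrow>
        (\<exists>f c. (\<forall>i j. i < j \<and> j < k \<longrightarrow> f i < f j) \<and> (\<forall>i<k. f i < N) \<and>
               (\<forall>e\<in>E. \<chi> (f ` e) = c)))"

definition ordered_ramsey :: "nat \<Rightarrow> nat \<Rightarrow> nat set set \<Rightarrow> nat" where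
  "ordered_ramsey t k E = (LEAST N. ordered_arrows N t k E)"

end

theory Submission
  imports Defs "HOL-Library.Ramsey"
begin

text \<open>Cut an initial segment of \<open>(2t + 1) r\<close> vertices into \<open>2t + 1\<close> blocks of \<open>r\<close> consecutive
  vertices and colour an edge by the pair of blocks containing its endpoints. Since each part of
  \<open>G\<close> has at least \<open>r + 1\<close> vertices, the images of \<open>v\<^sub>1, v\<^sub>m\<close> lie in blocks \<open>i < j\<close> and those of
  \<open>v\<^sub>m\<^sub>+\<^sub>1, v\<^sub>m\<^sub>+\<^sub>n\<close> in blocks \<open>k < l\<close> with \<open>j \<le> k\<close>. So it suffices to colour the pairs \<open>j \<le> k\<close> of
  blocks with \<open>t\<close> colours such that \<open>(i, k)\<close>, \<open>(j, k)\<close>, \<open>(j, l)\<close> never share a colour when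
  \<open>i < j \<le> k < l\<close>; then no copy of \<open>G\<close> is monochromatic, and \<open>R\<^sub>t(G) > (2t + 1) r\<close>.\<close>

lemma div_less_div_if_add_le:
  assumes "(r::nat) > 0" "x + r \<le> y"
  shows "x div r < y div r"
proof -
  have "x div r + 1 = (x + r) div r" using assms(1) by simp
  also have "\<dots> \<le> y div r" using assms(2) by (rule div_le_mono)
  finally show ?thesis by simp
qed

lemma increasing_add_diff_le:
  fixes f :: "nat \<Rightarrow> nat"
  assumes "\<forall>i j. i < j \<and> j < K \<longrightarrow> f i < f j" "a \<le> b" "b < K"
  shows "f a + (b - a) \<le> f b"
  using assms(2,3)
proof (induction b)
  case 0
  then show ?case by simp
next
  case (Suc b)
  show ?case
  proof (cases "a = Suc b")
    case False
    then have "a \<le> b" using Suc.prems by simp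
    moreover have "f b < f (Suc b)" using assms(1) Suc.prems by simp
    ultimately show ?thesis using Suc by simp
  qed simp
qed

definition block_colour :: "nat \<Rightarrow> nat \<Rightarrow> nat \<Rightarrow> nat" where
  "block_colour t j k =
     (if j < t then (if j = t - 1 \<and> k = t then t - 2 else j)
      else if j = t then (if k = t then t - 1 else k - t - 1)
      else k - j)"

lemma block_colour_less:
  assumes "t \<ge> 2" "j \<le> k" "k \<le> 2 * t"
  shows "block_colour t j k < t"
  using assms unfolding block_colour_def by (auto split: if_splits)

lemma block_colour_no_pattern:
  assumes "t \<ge> 2" "i < j" "j \<le> k" "k < l" "l \<le> 2 * t"
  shows "\<not> (block_colour t i k = block_colour t j k \<and> block_colour t j k = block_colour t j l)"
  using assms unfolding block_colour_def by (auto split: if_splits)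

definition block_edge_colouring :: "nat \<Rightarrow> nat \<Rightarrow> nat set \<Rightarrow> nat" where
  "block_edge_colouring t r e = block_colour t (Min e div r) (Max e div r)"

lemma block_edge_colouring_pair:
  "x < y \<Longrightarrow> block_edge_colouring t r {x, y} = block_colour t (x div r) (y div r)"
  unfolding block_edge_colouring_def by (simp add: min_def max_def)

lemma block_edge_colouring_less:
  assumes "t \<ge> 2" "r > 0" "x < y" "y < (2 * t + 1) * r"
  shows "block_edge_colouring t r {x, y} < t"
proof -
  have "y div r \<le> 2 * t"
    using less_mult_imp_div_less[of y "2 * t + 1" r] assms(4) by simp
  moreover have "x div r \<le> y div r"
    using assms(3) by (simp add: div_le_mono)
  ultimately show ?thesis
    using assms(1,3) block_colour_less by (simp add: block_edge_colouring_pair)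
qed

lemma block_edge_colouring_no_pattern:
  assumes "t \<ge> 2" "r > 0" "x\<^sub>0 + r \<le> x\<^sub>1" "x\<^sub>1 < y\<^sub>0" "y\<^sub>0 + r \<le> y\<^sub>1" "y\<^sub>1 < (2 * t + 1) * r"
  shows "\<not> (block_edge_colouring t r {x\<^sub>0, y\<^sub>0} = block_edge_colouring t r {x\<^sub>1, y\<^sub>1} \<and>
             block_edge_colouring t r {x\<^sub>1, y\<^sub>0} = block_edge_colouring t r {x\<^sub>1, y\<^sub>1})"
proof -
  have "x\<^sub>0 div r < x\<^sub>1 div r" "y\<^sub>0 div r < y\<^sub>1 div r"
    using assms(2,3,5) by (simp_all add: div_less_div_if_add_le)
  moreover have "x\<^sub>1 div r \<le> y\<^sub>0 div r"
    using assms(4) by (simp add: div_le_mono)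
  moreover have "y\<^sub>1 div r \<le> 2 * t"
    using less_mult_imp_div_less[of y\<^sub>1 "2 * t + 1" r] assms(6) by simp
  ultimately have "\<not> (block_colour t (x\<^sub>0 div r) (y\<^sub>0 div r) = block_colour t (x\<^sub>1 div r) (y\<^sub>0 div r) \<and>
                       block_colour t (x\<^sub>1 div r) (y\<^sub>0 div r) = block_colour t (x\<^sub>1 div r) (y\<^sub>1 div r))"
    using block_colour_no_pattern assms(1) by blast
  moreover have "x\<^sub>0 < y\<^sub>0" "x\<^sub>1 < y\<^sub>1"
    using assms(3-5) by linarith+
  ultimately show ?thesis
    using assms(4) by (auto simp: block_edge_colouring_pair)
qed

lemma not_ordered_arrows_zero: "k > 0 \<Longrightarrow> \<not> ordered_arrows 0 t k E"
  unfolding ordered_arrows_def by auto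

lemma not_ordered_arrows_two_parts:
  fixes t m n :: nat and E :: "nat set set"
  assumes "t \<ge> 2" "m \<ge> 1" "n \<ge> 1"
    and "{0, m} \<in> E" "{m - 1, m + n - 1} \<in> E" "{m - 1, m} \<in> E"
    and "N \<le> (2 * t + 1) * (min m n - 1)"
  shows "\<not> ordered_arrows N t (m + n) E"
proof
  assume arrows: "ordered_arrows N t (m + n) E"
  define r where "r = min m n - 1"
  show False
  proof (cases "r = 0")
    case True
    then show False
      using arrows assms(2,7) not_ordered_arrows_zero unfolding r_def by simp
  next
    case False
    then have "r > 0" by simp
    have "\<forall>x y. x < y \<and> y < N \<longrightarrow> block_edge_colouring t r {x, y} < t"
      using assms(1,7) \<open>r > 0\<close> block_edge_colouring_less unfolding r_def
      by (meson order_less_le_trans)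
    with arrows obtain f c where
      f_incr: "\<forall>i j. i < j \<and> j < m + n \<longrightarrow> f i < f j" and
      f_less: "\<forall>i < m + n. f i < N" and
      mono: "\<forall>e\<in>E. block_edge_colouring t r (f ` e) = c"
      unfolding ordered_arrows_def by blast
    have "r \<le> m - 1" "r \<le> n - 1"
      unfolding r_def by linarith+
    moreover have "f 0 + (m - 1 - 0) \<le> f (m - 1)"
      by (rule increasing_add_diff_le[OF f_incr]) (use assms(3) in simp_all)
    moreover have "f m + (m + n - 1 - m) \<le> f (m + n - 1)"
      by (rule increasing_add_diff_le[OF f_incr]) (use assms(2,3) in simp_all)
    ultimately have left_gap: "f 0 + r \<le> f (m - 1)" and right_gap: "f m + r \<le> f (m + n - 1)"
      by linarith+
    have middle: "f (m - 1) < f m"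
      using f_incr assms(2,3) by simp
    have "f (m + n - 1) < N"
      using f_less assms(2) by simp
    then have bound: "f (m + n - 1) < (2 * t + 1) * r"
      using assms(7) unfolding r_def by linarith
    have "block_edge_colouring t r {f 0, f m} = c"
      "block_edge_colouring t r {f (m - 1), f (m + n - 1)} = c"
      "block_edge_colouring t r {f (m - 1), f m} = c"
      using mono assms(4-6) by force+
    then show False
      using block_edge_colouring_no_pattern[OF assms(1) \<open>r > 0\<close> left_gap middle right_gap bound]
      by simp
  qed
qed

lemma ex_increasing_enumeration:
  assumes "finite H"
  obtains f :: "nat \<Rightarrow> nat"
  where "\<forall>i j. i < j \<and> j < card H \<longrightarrow> f i < f j" "\<And>i. i < card H \<Longrightarrow> f i \<in> H"
proof
  have len: "length (sorted_list_of_set H) = card H" by simp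
  show "\<forall>i j. i < j \<and> j < card H \<longrightarrow> sorted_list_of_set H ! i < sorted_list_of_set H ! j"
    using len by (metis strict_sorted_list_of_set sorted_wrt_nth_less)
  show "sorted_list_of_set H ! i \<in> H" if "i < card H" for i
    using that len assms by (metis nth_mem set_sorted_list_of_set)
qed

lemma ex_ordered_arrows:
  assumes "ordered_graph k E"
  shows "\<exists>N. ordered_arrows N t k E"
proof -
  obtain N :: nat where N: "partn_lst {..<N} (replicate t k) 2"
    using ramsey_full[of "replicate t k" 2] by blast
  have "ordered_arrows N t k E"
    unfolding ordered_arrows_def
  proof (intro allI impI)
    fix \<chi> :: "nat set \<Rightarrow> nat"
    assume \<chi>_less: "\<forall>i j. i < j \<and> j < N \<longrightarrow> \<chi> {i, j} < t"
    have "\<chi> \<in> nsets {..<N} 2 \<rightarrow> {..<t}"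
    proof
      fix e assume "e \<in> nsets {..<N} 2"
      then obtain x y where "e = {x, y}" "x < y" "y < N"
        by (auto elim!: nsets2_E simp: neq_iff) (metis insert_commute)
      then show "\<chi> e \<in> {..<t}" using \<chi>_less by simp
    qed
    then obtain c H where H: "H \<in> nsets {..<N} k" and mono: "\<chi> ` nsets H 2 \<subseteq> {c}"
      using partn_lstE[OF N] by (metis length_replicate nth_replicate)
    then have "finite H" "card H = k" "H \<subseteq> {..<N}"
      by (auto simp: nsets_def)
    then obtain f where f_incr: "\<forall>i j. i < j \<and> j < k \<longrightarrow> f i < f j" and f_mem: "\<And>i. i < k \<Longrightarrow> f i \<in> H"
      using ex_increasing_enumeration by metis
    have "\<chi> (f ` e) = c" if "e \<in> E" for e
    proof -
      obtain a b where "a < b" "b < k" "e = {a, b}"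
        using assms \<open>e \<in> E\<close> unfolding ordered_graph_def by blast
      moreover from this f_incr have "f a < f b" by blast
      ultimately have "f ` e \<in> nsets H 2"
        using f_mem by (auto simp: nsets_def card_insert_if)
      then show ?thesis using mono by auto
    qed
    then show "\<exists>f c. (\<forall>i j. i < j \<and> j < k \<longrightarrow> f i < f j) \<and> (\<forall>i<k. f i < N) \<and> (\<forall>e\<in>E. \<chi> (f ` e) = c)"
      using f_incr f_mem \<open>H \<subseteq> {..<N}\<close> by blast
  qed
  then show ?thesis by blast
qed

lemma ordered_ramsey_greater:
  assumes "ordered_graph k E" "\<And>N. N \<le> B \<Longrightarrow> \<not> ordered_arrows N t k E"
  shows "B < ordered_ramsey t k E"
proof -
  have "ordered_arrows (ordered_ramsey t k E) t k E"
    unfolding ordered_ramsey_def using ex_ordered_arrows[OF assms(1)] by (rule LeastI_ex)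
  then show ?thesis
    using assms(2) not_le by blast
qed

theorem corollary5p1:
  fixes t m n :: nat and E :: "nat set set"
  assumes "t \<ge> 2"
    and "ordered_graph (m + n) E"
    and "two_ichromatic (m + n) E"
    and "interval_coloring (m + n) E {{0..<m}, {m..<m + n}}"
    and "{0, m} \<in> E"
    and "{m - 1, m + n - 1} \<in> E"
    and "{m - 1, m} \<in> E"
  shows "ordered_ramsey t (m + n) E \<ge> (2 * t + 1) * (min m n - 1) + 1"
proof -
  have "m \<ge> 1" "n \<ge> 1"
    using assms(4) unfolding interval_coloring_def by auto
  then have "(2 * t + 1) * (min m n - 1) < ordered_ramsey t (m + n) E"
    using ordered_ramsey_greater[OF assms(2)] not_ordered_arrows_two_parts assms(1,5-7) by blast
  then show ?thesis by simp
qed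

end
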